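(* Let $h>0$, $n\in\mathbb{N}$, and let $\lambda:\mathbb{T}\to\mathbb{R}$ be an $n$-cycle with values $\lambda_0,\dots,\lambda_{n-1}\in\mathbb{R}\setminus\{\pm\tfrac1h\}$, such that $0<|e_{\lambda}(nh)|\neq1$ and $0<|e_{-\lambda}(nh)|\neq1$. Then the discrete Hill-type equation $$\Delta_h^2 y(t)+\bigl[\Delta_h\lambda(t)-\lambda(t)\lambda(t+h)\bigr]y(t)=0,\qquad t\in\mathbb{T},$$ has Hyers–Ulam stability on $\mathbb{T}$ with Hyers–Ulam stability constant $K=K_0(\lambda)K_0(-\lambda)$.
   Context: Fix $h>0$ and let $\mathbb{T}=\{0,h,2h,3h,\dots\}$. For $x:\mathbb{T}\to\mathbb{R}$, $\Delta_h x(t)=\frac{x(t+h)-x(t)}{h}$ and $\Delta_h^2x=\Delta_h(\Delta_h x)$, $\Delta_h^3x=\Delta_h(\Delta_h^2 x)$. An $n$-cycle is a function $\mu:\mathbb{T}\to\mathbb{R}$ with $\mu(t)=\mu_k$ whenever $t/h\equiv k\pmod n$, $k\in\{0,\dots,n-1\}$, which has period $n$ and no smaller period. For such $\mu$ define the discrete exponential $e_\mu(t)=\prod_{k=0}^{t/h-1}(1+h\mu(kh))$ (empty product $=1$), so $e_\mu(nh)=\prod_{k=0}^{n-1}(1+h\mu_k)$. For $k\in\{0,\dots,n-1\}$ define $$S_k(\mu)=\sum_{j=1}^{n}\prod_{i=0}^{j-1}\frac{1}{|1+h\mu_{(k+i)\bmod n}|},$$ (e.g. $S_0(\mu)=\frac{1}{|1+h\mu_0|}+\frac{1}{|1+h\mu_0||1+h\mu_1|}+\dots+\frac{1}{|1+h\mu_0|\cdots|1+h\mu_{n-1}|}$),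 and, when $0<|e_\mu(nh)|\neq1$, $$K_0(\mu)=\frac{h|e_\mu(nh)|}{\bigl|1-|e_\mu(nh)|\bigr|}\max\{S_0(\mu),\dots,S_{n-1}(\mu)\}.$$ Here $-\lambda$ denotes the $n$-cycle with values $-\lambda_0,\dots,-\lambda_{n-1}$. Hyers–Ulam stability: an equation $\mathcal{L}[y](t)=f(t)$, $t\in\mathbb{T}$ (with $\mathcal{L}$ a linear difference operator) has Hyers–Ulam stability on $\mathbb{T}$ with Hyers–Ulam stability constant $K>0$ if for every $\varepsilon>0$ and every $\xi:\mathbb{T}\to\mathbb{R}$ with $|\mathcal{L}[\xi](t)-f(t)|\le\varepsilon$ for all $t\in\mathbb{T}$, there is a solution $y:\mathbb{T}\to\mathbb{R}$ of the equation with $|\xi(t)-y(t)|\le K\varepsilon$ for all $t\in\mathbb{T}$. The minimum Hyers–Ulam stability constant is the smallest such $K$. *)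

theory Defs
  imports "HOL-Analysis.Analysis"
begin

text \<open>Functions on T = {0,h,2h,...} are represented as functions nat => real,
  the argument m standing for the point t = m*h.\<close>

definition delta_h :: "real \<Rightarrow> (nat \<Rightarrow> real) \<Rightarrow> nat \<Rightarrow> real" where
  "delta_h h x m = (x (Suc m) - x m) / h"

definition is_n_cycle :: "nat \<Rightarrow> (nat \<Rightarrow> real) \<Rightarrow> bool" where
  "is_n_cycle n mu \<longleftrightarrow> n \<ge> 1 \<and> (\<forall>m. mu (m + n) = mu m) \<and>
     (\<forall>p. 0 < p \<and> p < n \<longrightarrow> \<not> (\<forall>m. mu (m + p) = mu m))"

definition dexp :: "real \<Rightarrow> (nat \<Rightarrow> real) \<Rightarrow> nat \<Rightarrow> real" where
  "dexp h mu m = (\<Prod>k<m. 1 + h * mu k)"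

definition S_k :: "real \<Rightarrow> nat \<Rightarrow> (nat \<Rightarrow> real) \<Rightarrow> nat \<Rightarrow> real" where
  "S_k h n mu k = (\<Sum>j=1..n. \<Prod>i<j. 1 / \<bar>1 + h * mu ((k + i) mod n)\<bar>)"

definition K0 :: "real \<Rightarrow> nat \<Rightarrow> (nat \<Rightarrow> real) \<Rightarrow> real" where
  "K0 h n mu = h * \<bar>dexp h mu n\<bar> / \<bar>1 - \<bar>dexp h mu n\<bar>\<bar> * Max ((S_k h n mu) ` {0..<n})"

definition HU_stable :: "((nat \<Rightarrow> real) \<Rightarrow> nat \<Rightarrow> real) \<Rightarrow> (nat \<Rightarrow> real) \<Rightarrow> real \<Rightarrow> bool" where
  "HU_stable L f K \<longleftrightarrow> K > 0 \<and>
     (\<forall>\<epsilon>>0. \<forall>\<xi>. (\<forall>m. \<bar>L \<xi> m - f m\<bar> \<le> \<epsilon>) \<longrightarrow>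
        (\<exists>y. (\<forall>m. L y m = f m) \<and> (\<forall>m. \<bar>\<xi> m - y m\<bar> \<le> K * \<epsilon>)))"

definition hill_op :: "real \<Rightarrow> (nat \<Rightarrow> real) \<Rightarrow> (nat \<Rightarrow> real) \<Rightarrow> nat \<Rightarrow> real" where
  "hill_op h lam y m = delta_h h (delta_h h y) m
      + (delta_h h lam m - lam m * lam (Suc m)) * y m"

end

theory Submission
  imports Defs
begin

text \<open>With \<open>v = \<Delta>y + \<lambda>y\<close> one has \<open>\<Delta>v - \<lambda>(t+h) v = \<Delta>\<^sup>2y + [\<Delta>\<lambda> - \<lambda>(t)\<lambda>(t+h)] y\<close>,
  so the Hill operator is the composition of two first-order operators whose multipliers
  \<open>1 - h\<lambda>\<close> and \<open>1 + h\<lambda>(\<cdot>+h)\<close> are \<open>n\<close>-periodic. A first-order equation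
  \<open>d(t+h) = a(t) d(t) + h r(t)\<close> with bounded forcing has a bounded solution: summed forward
  from \<open>0\<close> if the monodromy \<open>|e(nh)|\<close> is below \<open>1\<close>, and as the backward series
  \<open>-h \<Sum>\<^sub>j r(t+jh) / a(t)\<cdots>a(t+jh)\<close> if it exceeds \<open>1\<close>. In both cases the weight
  \<open>|e|/|1-|e|| S\<^sub>k\<close> satisfies exactly the recursion needed to propagate the bound, giving the
  constant \<open>K\<^sub>0\<close>. Solving the two factors in turn yields \<open>K\<^sub>0(\<lambda>) K\<^sub>0(-\<lambda>)\<close>.\<close>

lemma periodic_mod:
  fixes a :: "nat \<Rightarrow> 'a"
  assumes "\<And>m. a (m + n) = a m"
  shows "a (m mod n) = a m"
proof -
  have "a (k + q * n) = a k" for k q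
  proof (induction q)
    case (Suc q)
    have "k + Suc q * n = (k + q * n) + n" by simp
    then show ?case using Suc assms by presburger
  qed simp
  then show ?thesis by (metis mod_div_mult_eq mult.commute)
qed

lemma prod_periodic_shift:
  fixes a :: "nat \<Rightarrow> real"
  assumes per: "\<And>m. a (m + n) = a m" and nz: "\<And>m. a m \<noteq> 0"
  shows "(\<Prod>i<n. a (k + i)) = (\<Prod>i<n. a i)"
proof (induction k)
  case (Suc k)
  have "a k * (\<Prod>i<n. a (Suc k + i)) = (\<Prod>i<Suc n. a (k + i))"
    by (simp add: prod.lessThan_Suc_shift del: prod.lessThan_Suc)
  also have "\<dots> = a k * (\<Prod>i<n. a (k + i))"
    using per[of k] by (simp add: add.commute)
  finally show ?case using Suc nz[of k] by simp
qed simp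

definition inv_prod_sum :: "(nat \<Rightarrow> real) \<Rightarrow> nat \<Rightarrow> nat \<Rightarrow> real" where
  "inv_prod_sum a n k = (\<Sum>j=1..n. \<Prod>i<j. 1 / \<bar>a (k + i)\<bar>)"

lemma inv_prod_sum_nonneg: "0 \<le> inv_prod_sum a n k"
  unfolding inv_prod_sum_def by (intro sum_nonneg prod_nonneg) auto

lemma inv_prod_sum_rec:
  fixes a :: "nat \<Rightarrow> real"
  assumes per: "\<And>m. a (m + n) = a m" and nz: "\<And>m. a m \<noteq> 0"
  shows "\<bar>a k\<bar> * inv_prod_sum a n k = 1 + inv_prod_sum a n (Suc k) - 1 / \<bar>\<Prod>i<n. a i\<bar>"
proof -
  define G where "G j = (\<Prod>i<j. 1 / \<bar>a (Suc k + i)\<bar>)" for j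
  have "inv_prod_sum a n k = (\<Sum>j<n. \<Prod>i<Suc j. 1 / \<bar>a (k + i)\<bar>)"
    unfolding inv_prod_sum_def by (simp add: sum.atLeast1_atMost_eq)
  also have "\<dots> = (\<Sum>j<n. G j) / \<bar>a k\<bar>"
    unfolding G_def by (simp add: prod.lessThan_Suc_shift sum_divide_distrib del: prod.lessThan_Suc)
  finally have "\<bar>a k\<bar> * inv_prod_sum a n k = (\<Sum>j<n. G j)"
    using nz[of k] by simp
  also have "\<dots> = (\<Sum>j<Suc n. G j) - G n" by simp
  also have "(\<Sum>j<Suc n. G j) = 1 + inv_prod_sum a n (Suc k)"
    unfolding G_def inv_prod_sum_def
    by (simp only: sum.lessThan_Suc_shift) (simp add: sum.atLeast1_atMost_eq)
  also have "G n = 1 / \<bar>\<Prod>i<n. a i\<bar>"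
    using prod_periodic_shift[of a n, OF per nz, of "Suc k"]
    unfolding G_def by (simp add: prod_dividef flip: abs_prod)
  finally show ?thesis .
qed

lemma forward_solution_bounded:
  fixes a r W :: "nat \<Rightarrow> real"
  assumes W0: "0 \<le> W 0" and W_step: "\<And>m. \<bar>a m\<bar> * W m + 1 \<le> W (Suc m)"
    and r: "\<And>m. \<bar>r m\<bar> \<le> \<epsilon>"
  shows "\<exists>d. (\<forall>m. d (Suc m) = a m * d m + r m) \<and> (\<forall>m. \<bar>d m\<bar> \<le> \<epsilon> * W m)"
proof -
  define d where "d = rec_nat 0 (\<lambda>m x. a m * x + r m)"
  have d0: "d 0 = 0" and dS: "d (Suc m) = a m * d m + r m" for m
    by (simp_all add: d_def)
  have \<epsilon>0: "0 \<le> \<epsilon>" using r[of 0] by linarith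
  have "\<bar>d m\<bar> \<le> \<epsilon> * W m" for m
  proof (induction m)
    case 0
    show ?case using W0 \<epsilon>0 by (simp add: d0)
  next
    case (Suc m)
    have "\<bar>d (Suc m)\<bar> \<le> \<bar>a m\<bar> * \<bar>d m\<bar> + \<bar>r m\<bar>"
      unfolding dS abs_mult[symmetric] by (rule abs_triangle_ineq)
    also have "\<dots> \<le> \<bar>a m\<bar> * (\<epsilon> * W m) + \<epsilon>"
      using Suc.IH r by (intro add_mono mult_left_mono) auto
    also have "\<dots> \<le> \<epsilon> * W (Suc m)"
      using mult_left_mono[OF W_step \<epsilon>0] by (simp add: algebra_simps)
    finally show ?case .
  qed
  then show ?thesis using dS by blast
qed

lemma sum_inv_prod_le:
  fixes a W :: "nat \<Rightarrow> real"
  assumes nz: "\<And>m. a m \<noteq> 0" and W0: "\<And>m. 0 \<le> W m"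
    and W_step: "\<And>m. 1 + W (Suc m) \<le> \<bar>a m\<bar> * W m"
  shows "(\<Sum>j<N. 1 / \<bar>\<Prod>i<Suc j. a (m + i)\<bar>) \<le> W m"
proof (induction N arbitrary: m)
  case 0
  then show ?case using W0 by simp
next
  case (Suc N)
  have "(\<Sum>j<Suc N. 1 / \<bar>\<Prod>i<Suc j. a (m + i)\<bar>)
      = (1 + (\<Sum>j<N. 1 / \<bar>\<Prod>i<Suc j. a (Suc m + i)\<bar>)) / \<bar>a m\<bar>"
    by (simp only: sum.lessThan_Suc_shift prod.lessThan_Suc_shift)
       (simp add: abs_mult sum_divide_distrib add_divide_distrib ac_simps)
  also have "\<dots> \<le> (1 + W (Suc m)) / \<bar>a m\<bar>"
    using Suc.IH[of "Suc m"] by (intro divide_right_mono) auto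
  also have "\<dots> \<le> W m"
    using W_step[of m] nz[of m] by (simp add: divide_le_eq mult.commute)
  finally show ?case .
qed

lemma backward_solution_bounded:
  fixes a r W :: "nat \<Rightarrow> real"
  assumes nz: "\<And>m. a m \<noteq> 0" and W0: "\<And>m. 0 \<le> W m"
    and W_step: "\<And>m. 1 + W (Suc m) \<le> \<bar>a m\<bar> * W m"
    and r: "\<And>m. \<bar>r m\<bar> \<le> \<epsilon>"
  shows "\<exists>d. (\<forall>m. d (Suc m) = a m * d m + r m) \<and> (\<forall>m. \<bar>d m\<bar> \<le> \<epsilon> * W m)"
proof -
  define f where "f m j = r (m + j) / (\<Prod>i<Suc j. a (m + i))" for m j
  have f_bound: "\<bar>f m j\<bar> \<le> \<epsilon> * (1 / \<bar>\<Prod>i<Suc j. a (m + i)\<bar>)" for m j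
    using r unfolding f_def by (simp add: abs_divide divide_right_mono)
  have \<epsilon>0: "0 \<le> \<epsilon>" using r[of 0] by linarith
  have partial_bound: "(\<Sum>j<N. \<bar>f m j\<bar>) \<le> \<epsilon> * W m" for m N
  proof -
    have "(\<Sum>j<N. \<bar>f m j\<bar>) \<le> \<epsilon> * (\<Sum>j<N. 1 / \<bar>\<Prod>i<Suc j. a (m + i)\<bar>)"
      unfolding sum_distrib_left by (intro sum_mono f_bound)
    also have "\<dots> \<le> \<epsilon> * W m"
      using sum_inv_prod_le[of a W, OF nz W0 W_step] \<epsilon>0 by (intro mult_left_mono) auto
    finally show ?thesis .
  qed
  have abs_summable: "summable (\<lambda>j. \<bar>f m j\<bar>)" for m
    by (rule summableI_nonneg_bounded[OF _ partial_bound]) simp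
  then have summable: "summable (f m)" for m
    by (rule summable_rabs_cancel)
  define d where "d m = - suminf (f m)" for m
  have "d (Suc m) = a m * d m + r m" for m
  proof -
    have "suminf (f m) = f m 0 + (\<Sum>j. f m (Suc j))"
      using suminf_split_head[OF summable] by simp
    also have "(\<lambda>j. f m (Suc j)) = (\<lambda>j. f (Suc m) j / a m)"
      unfolding f_def by (simp only: prod.lessThan_Suc_shift) (simp add: ac_simps)
    also have "f m 0 = r m / a m" unfolding f_def by simp
    finally have "suminf (f m) = (r m + suminf (f (Suc m))) / a m"
      using suminf_divide[OF summable] by (simp add: add_divide_distrib)
    then show ?thesis unfolding d_def using nz[of m] by (simp add: field_simps)
  qed
  moreover have "\<bar>d m\<bar> \<le> \<epsilon> * W m" for m
  proof -
    have "\<bar>suminf (f m)\<bar> \<le> (\<Sum>j. \<bar>f m j\<bar>)"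
      by (rule summable_rabs[OF abs_summable])
    also have "\<dots> \<le> \<epsilon> * W m"
      by (intro suminf_le_const abs_summable partial_bound)
    finally show ?thesis unfolding d_def by simp
  qed
  ultimately show ?thesis by blast
qed

text \<open>\<open>d (Suc m) = a m * d m + h * r m\<close> is the equation \<open>\<Delta>\<^sub>h d = ((a - 1)/h) d + r\<close>.\<close>

definition bounded_response :: "real \<Rightarrow> (nat \<Rightarrow> real) \<Rightarrow> real \<Rightarrow> bool" where
  "bounded_response h a K \<longleftrightarrow>
     (\<forall>\<epsilon> r. (\<forall>m. \<bar>r m\<bar> \<le> \<epsilon>) \<longrightarrow>
        (\<exists>d. (\<forall>m. d (Suc m) = a m * d m + h * r m) \<and> (\<forall>m. \<bar>d m\<bar> \<le> K * \<epsilon>)))"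

lemma bounded_response_periodic:
  fixes a :: "nat \<Rightarrow> real"
  assumes h: "0 \<le> h" and per: "\<And>m. a (m + n) = a m" and nz: "\<And>m. a m \<noteq> 0"
    and P_ne_1: "\<bar>\<Prod>i<n. a i\<bar> \<noteq> 1" and B: "\<And>k. inv_prod_sum a n k \<le> B"
  shows "bounded_response h a
           (h * \<bar>\<Prod>i<n. a i\<bar> / \<bar>1 - \<bar>\<Prod>i<n. a i\<bar>\<bar> * B)"
  unfolding bounded_response_def
proof (intro allI impI)
  fix \<epsilon> and r :: "nat \<Rightarrow> real"
  assume r: "\<forall>m. \<bar>r m\<bar> \<le> \<epsilon>"
  define P where "P = \<bar>\<Prod>i<n. a i\<bar>"
  define C where "C = P / \<bar>1 - P\<bar>"
  define W where "W k = C * inv_prod_sum a n k" for k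
  have P_pos: "0 < P" unfolding P_def using nz by (simp add: prod_zero_iff)
  have C_nonneg: "0 \<le> C" unfolding C_def using P_pos by simp
  have W_nonneg: "0 \<le> W k" for k unfolding W_def using C_nonneg inv_prod_sum_nonneg by simp
  have W_rec: "\<bar>a k\<bar> * W k = W (Suc k) + C - C / P" for k
  proof -
    have "\<bar>a k\<bar> * W k = C * (\<bar>a k\<bar> * inv_prod_sum a n k)" unfolding W_def by simp
    also have "\<dots> = C * (1 + inv_prod_sum a n (Suc k) - 1 / P)"
      unfolding P_def inv_prod_sum_rec[of a n, OF per nz] ..
    finally show ?thesis unfolding W_def by (simp add: algebra_simps)
  qed
  have hr: "\<bar>h * r m\<bar> \<le> h * \<epsilon>" for m
    using r h by (simp add: abs_mult mult_left_mono)
  have "\<exists>d. (\<forall>m. d (Suc m) = a m * d m + h * r m) \<and> (\<forall>m. \<bar>d m\<bar> \<le> h * \<epsilon> * W m)"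
  proof (cases "P < 1")
    case True
    then have "C = P / (1 - P)" unfolding C_def by simp
    then have "C - C / P = - 1" using True P_pos by (simp add: field_simps)
    then show ?thesis
      using W_rec by (intro forward_solution_bounded W_nonneg hr) simp
  next
    case False
    then have "1 < P" using P_ne_1 unfolding P_def by simp
    moreover from this have "C = P / (P - 1)" unfolding C_def by simp
    ultimately have "C - C / P = 1" by (simp add: field_simps)
    then show ?thesis
      using W_rec nz by (intro backward_solution_bounded W_nonneg hr) simp_all
  qed
  then obtain d where d: "\<forall>m. d (Suc m) = a m * d m + h * r m"
    and d_bound: "\<forall>m. \<bar>d m\<bar> \<le> h * \<epsilon> * W m" by blast
  have "h * \<epsilon> * W m \<le> h * P / \<bar>1 - P\<bar> * B * \<epsilon>" for m
  proof -
    have "0 \<le> h * \<epsilon> * C" using h r C_nonneg by (meson abs_ge_zero order_trans mult_nonneg_nonneg)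
    with B[of m] have "h * \<epsilon> * C * inv_prod_sum a n m \<le> h * \<epsilon> * C * B"
      by (rule mult_left_mono)
    then show ?thesis unfolding W_def C_def by (simp add: ac_simps)
  qed
  with d d_bound show "\<exists>d. (\<forall>m. d (Suc m) = a m * d m + h * r m) \<and>
      (\<forall>m. \<bar>d m\<bar> \<le> h * \<bar>\<Prod>i<n. a i\<bar> / \<bar>1 - \<bar>\<Prod>i<n. a i\<bar>\<bar> * B * \<epsilon>)"
    unfolding P_def by (meson order_trans)
qed

lemma S_k_eq_inv_prod_sum:
  assumes per: "\<And>m. mu (m + n) = mu m"
  shows "S_k h n mu k = inv_prod_sum (\<lambda>m. 1 + h * mu m) n k"
  unfolding S_k_def inv_prod_sum_def periodic_mod[of mu, OF per] ..

lemma S_k_le_Max: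
  assumes "n \<ge> 1"
  shows "S_k h n mu k \<le> Max (S_k h n mu ` {0..<n})"
proof -
  have "S_k h n mu k = S_k h n mu (k mod n)"
    unfolding S_k_def by (simp add: mod_add_left_eq)
  then show ?thesis using assms by (simp add: Max_ge)
qed

lemma K0_pos:
  assumes "h > 0" and "n \<ge> 1" and nz: "\<And>m. 1 + h * mu m \<noteq> 0"
    and "0 < \<bar>dexp h mu n\<bar>" and "\<bar>dexp h mu n\<bar> \<noteq> 1"
  shows "0 < K0 h n mu"
proof -
  have "0 < S_k h n mu 0"
    unfolding S_k_def using assms(2) nz by (intro sum_pos prod_pos) auto
  also have "\<dots> \<le> Max (S_k h n mu ` {0..<n})" using S_k_le_Max[OF assms(2)] .
  finally show ?thesis unfolding K0_def using assms by simp
qed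

lemma bounded_response_K0:
  assumes h: "h > 0" and n: "n \<ge> 1" and per: "\<And>m. mu (m + n) = mu m"
    and nz: "\<And>m. 1 + h * mu m \<noteq> 0" and e_ne_1: "\<bar>dexp h mu n\<bar> \<noteq> 1"
  shows "bounded_response h (\<lambda>m. 1 + h * mu (m + s)) (K0 h n mu)"
proof -
  have "(\<Prod>i<n. 1 + h * mu (s + i)) = dexp h mu n"
    unfolding dexp_def using per nz by (intro prod_periodic_shift[where a="\<lambda>m. 1 + h * mu m"]) simp_all
  then have P: "(\<Prod>i<n. 1 + h * mu (i + s)) = dexp h mu n" by (simp add: add.commute)
  have "inv_prod_sum (\<lambda>m. 1 + h * mu (m + s)) n k = S_k h n mu (k + s)" for k
    unfolding S_k_eq_inv_prod_sum[of mu, OF per] inv_prod_sum_def by (simp add: ac_simps)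
  then have "inv_prod_sum (\<lambda>m. 1 + h * mu (m + s)) n k \<le> Max (S_k h n mu ` {0..<n})" for k
    using S_k_le_Max[OF n] by simp
  moreover have "mu (m + n + s) = mu (m + s)" for m
    using per[of "m + s"] by (simp add: ac_simps)
  ultimately show ?thesis
    using bounded_response_periodic[of h "\<lambda>m. 1 + h * mu (m + s)" n] h nz e_ne_1
    unfolding K0_def P by simp
qed

lemma hill_op_factorization:
  assumes "h \<noteq> 0"
  shows "delta_h h x (Suc m) + lam (Suc m) * x (Suc m)
     = (1 + h * lam (Suc m)) * (delta_h h x m + lam m * x m) + h * hill_op h lam x m"
  using assms unfolding hill_op_def delta_h_def by (simp add: field_simps)

lemma HU_stable_hill_op:
  assumes h: "h \<noteq> 0" and K_pos: "0 < K1" "0 < K2"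
    and resp1: "bounded_response h (\<lambda>m. 1 + h * lam (Suc m)) K1"
    and resp2: "bounded_response h (\<lambda>m. 1 - h * lam m) K2"
  shows "HU_stable (hill_op h lam) (\<lambda>_. 0) (K1 * K2)"
  unfolding HU_stable_def
proof (intro conjI allI impI)
  show "0 < K1 * K2" using K_pos by simp
  fix \<epsilon> :: real and \<xi> :: "nat \<Rightarrow> real"
  assume "\<forall>m. \<bar>hill_op h lam \<xi> m - 0\<bar> \<le> \<epsilon>"
  then have "\<forall>m. \<bar>hill_op h lam \<xi> m\<bar> \<le> \<epsilon>" by simp
  with resp1 obtain d1 where d1: "\<forall>m. d1 (Suc m) = (1 + h * lam (Suc m)) * d1 m + h * hill_op h lam \<xi> m"
    and d1_bound: "\<forall>m. \<bar>d1 m\<bar> \<le> K1 * \<epsilon>"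
    unfolding bounded_response_def by blast
  from resp2 d1_bound obtain d2 where d2: "\<forall>m. d2 (Suc m) = (1 - h * lam m) * d2 m + h * d1 m"
    and d2_bound: "\<forall>m. \<bar>d2 m\<bar> \<le> K2 * (K1 * \<epsilon>)"
    unfolding bounded_response_def by blast
  define y where "y m = \<xi> m - d2 m" for m
  define u where "u m = delta_h h \<xi> m + lam m * \<xi> m - d1 m" for m
  have u_rec: "u (Suc m) = (1 + h * lam (Suc m)) * u m" for m
    unfolding u_def using hill_op_factorization[OF h, of \<xi> m lam] d1 by (simp add: algebra_simps)
  have d2_step: "(d2 (Suc m) - d2 m) / h + lam m * d2 m = d1 m" for m
    using d2 h by (simp add: field_simps)
  have "delta_h h y m + lam m * y m = u m" for m
    using d2_step[of m] unfolding y_def u_def delta_h_def diff_divide_distrib by argo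
  then have "hill_op h lam y m = 0" for m
    using hill_op_factorization[OF h, of y m lam] u_rec[of m] h by simp
  moreover have "\<bar>\<xi> m - y m\<bar> \<le> K1 * K2 * \<epsilon>" for m
    using d2_bound unfolding y_def by (simp add: ac_simps)
  ultimately show "\<exists>y. (\<forall>m. hill_op h lam y m = 0) \<and> (\<forall>m. \<bar>\<xi> m - y m\<bar> \<le> K1 * K2 * \<epsilon>)"
    by blast
qed

theorem theorem3p2:
  fixes h :: real and n :: nat and lam :: "nat \<Rightarrow> real"
  assumes "h > 0"
    and "is_n_cycle n lam"
    and "\<And>m. lam m \<noteq> 1 / h \<and> lam m \<noteq> - (1 / h)"
    and "0 < \<bar>dexp h lam n\<bar>" and "\<bar>dexp h lam n\<bar> \<noteq> 1"
    and "0 < \<bar>dexp h (\<lambda>m. - lam m) n\<bar>" and "\<bar>dexp h (\<lambda>m. - lam m) n\<bar> \<noteq> 1"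
  shows "HU_stable (hill_op h lam) (\<lambda>_. 0)
           (K0 h n lam * K0 h n (\<lambda>m. - lam m))"
proof -
  have n: "n \<ge> 1" and per: "\<And>m. lam (m + n) = lam m"
    using assms(2) unfolding is_n_cycle_def by auto
  have per_neg: "\<And>m. - lam (m + n) = - lam m" using per by simp
  have nz: "1 + h * lam m \<noteq> 0" and nz_neg: "1 + h * - lam m \<noteq> 0" for m
  proof -
    have "1 + h * lam m = h * (lam m + 1 / h)" and "1 + h * - lam m = - h * (lam m - 1 / h)"
      using assms(1) by (simp_all add: field_simps)
    then show "1 + h * lam m \<noteq> 0" and "1 + h * - lam m \<noteq> 0"
      using assms(1) assms(3)[of m] by auto
  qed
  have "bounded_response h (\<lambda>m. 1 + h * lam (Suc m)) (K0 h n lam)"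
    using bounded_response_K0[of h n lam, OF assms(1) n per nz assms(5), of 1] by simp
  moreover have "bounded_response h (\<lambda>m. 1 - h * lam m) (K0 h n (\<lambda>m. - lam m))"
    using bounded_response_K0[OF assms(1) n per_neg nz_neg assms(7), of 0] by simp
  moreover have "0 < K0 h n lam" and "0 < K0 h n (\<lambda>m. - lam m)"
    using K0_pos[OF assms(1) n] nz nz_neg assms(4-7) by auto
  ultimately show ?thesis using HU_stable_hill_op assms(1) by simp
qed

end
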